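(* Let $q$ be a prime power, $l\ge1$, $t=q^l$, and let $i$ be an integer with $1\le i<q-1$. Let $G_4(x)=x^t+x^{t-1}+1$, $G_5(x)=x^{t+1}+x^t+x$, and $L_4^*=\{\alpha\in GF(t^2):\ \alpha\neq0,\ G_4(\alpha)\ne0\}=\{\alpha_1,\dots,\alpha_n\}$. Let $H_4^{*(i)}$ be the $it\times n$ matrix with entries $\alpha_k^s/G_4(\alpha_k)^i$ ($s=0,\dots,it-1$, $k=1,\dots,n$). Then the matrix obtained by placing the row $\big(1/G_5(\alpha_1)^i,\dots,1/G_5(\alpha_n)^i\big)$ on top of $H_4^{*(i)}$ is a parity-check matrix of $\Gamma_5^{(i)}=\Gamma(L_4^*,G_5^i)$; that is, $\Gamma_5^{(i)}=\{c\in\Gamma_4^{*(i)}:\ \sum_k c_k/G_5(\alpha_k)^i=0\}$ where $\Gamma_4^{*(i)}=\Gamma(L_4^*,G_4^i)$, and the entries $1/G_5(\alpha_k)^i$ all lie in $GF(t)$.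
   Context: For a set $L=\{\alpha_1,\dots,\alpha_n\}$ of distinct elements of $GF(t^2)$ and $P\in GF(t^2)[x]$ with $P(\alpha_k)\neq0$ for all $k$, the $q$-ary Goppa code is $\Gamma(L,P)=\{c\in GF(q)^n:\ \sum_k c_k\alpha_k^s/P(\alpha_k)=0 \text{ for } s=0,\dots,\deg P-1\}$. A matrix $H$ over $GF(t^2)$ is a parity-check matrix of a $q$-ary code $C$ if $C=\{c\in GF(q)^n: cH^T=0\}$. *)

theory Defs
  imports "HOL-Computational_Algebra.Computational_Algebra"
begin

text \<open>The subfield GF(k) of a finite field of order k^m, realised as the set
  of elements fixed by x |-> x^k.\<close>
definition subfield_GF :: "nat \<Rightarrow> ('a::field) set" where
  "subfield_GF k = {x. x ^ k = x}"

text \<open>Words of length n over GF(q) indexed by the (finite) code locator set L: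
  functions L -> GF(q), extended by 0 outside L.\<close>
definition words :: "nat \<Rightarrow> ('a::field) set \<Rightarrow> ('a \<Rightarrow> 'a) set" where
  "words q L = {c. (\<forall>a. a \<notin> L \<longrightarrow> c a = 0) \<and> (\<forall>a\<in>L. c a \<in> subfield_GF q)}"

definition goppa_code :: "nat \<Rightarrow> ('a::field) set \<Rightarrow> 'a poly \<Rightarrow> ('a \<Rightarrow> 'a) set" where
  "goppa_code q L P = {c \<in> words q L.
      \<forall>s < degree P. (\<Sum>a\<in>L. c a * a ^ s / poly P a) = 0}"

text \<open>H (given as a list of rows, each row a function on L) is a parity-check
  matrix of the q-ary code C.\<close>
definition is_parity_check :: "nat \<Rightarrow> ('a::field) set \<Rightarrow> ('a \<Rightarrow> 'a) list \<Rightarrow> ('a \<Rightarrow> 'a) set \<Rightarrow> bool" where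
  "is_parity_check q L H C \<longleftrightarrow>
     C = {c \<in> words q L. \<forall>r \<in> set H. (\<Sum>a\<in>L. c a * r a) = 0}"

definition G4 :: "nat \<Rightarrow> ('a::field) poly" where
  "G4 t = monom 1 t + monom 1 (t - 1) + 1"

definition G5 :: "nat \<Rightarrow> ('a::field) poly" where
  "G5 t = monom 1 (t + 1) + monom 1 t + monom 1 1"

definition L4star :: "nat \<Rightarrow> ('a::field) set" where
  "L4star t = {a. a \<noteq> 0 \<and> poly (G4 t) a \<noteq> 0}"

end

theory Submission
  imports Defs "HOL-Number_Theory.Residues"
begin

text \<open>Since \<open>G\<^sub>5 = x G\<^sub>4\<close>, the conditions defining \<open>\<Gamma>(L, G\<^sub>4\<^sup>i)\<close> are exactly the
  syndromes \<open>S\<^sub>s = \<Sum> c\<^sub>k \<alpha>\<^sub>k\<^sup>s / G\<^sub>5(\<alpha>\<^sub>k)\<^sup>i\<close> of \<open>\<Gamma>(L, G\<^sub>5\<^sup>i)\<close> with \<open>i \<le> s < i(t+1)\<close>;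
  those with \<open>s < i\<close> are missing, and \<open>S\<^sub>0\<close> is the added row. For \<open>0 < s < i\<close> the
  Frobenius \<open>y \<mapsto> y\<^sup>t\<close> fixes the \<open>c\<^sub>k\<close>, the values \<open>G\<^sub>5(\<alpha>)\<close> and \<open>\<alpha>\<^bsup>t\<^sup>2\<^esup> = \<alpha>\<close>, hence
  \<open>S\<^sub>s = S\<^sub>s\<^sub>t\<^sup>t\<close>; as \<open>i < t\<close> we have \<open>i \<le> st < it\<close>, so \<open>S\<^sub>s\<^sub>t\<close> is already one of the
  conditions of \<open>\<Gamma>(L, G\<^sub>4\<^sup>i)\<close>.\<close>

lemma power_card_UNIV_eq_self:
  fixes x :: "'a::{finite,field}"
  shows "x ^ card (UNIV :: 'a set) = x"
proof (cases "x = 0")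
  case True
  then show ?thesis
    using finite_UNIV_card_ge_0[where 'a = 'a] by simp
next
  case False
  define U where "U = UNIV - {0 :: 'a}"
  have "prod id U = (\<Prod>y\<in>U. x * y)"
    using False by (intro prod.reindex_bij_witness[of _ "\<lambda>y. x * y" "\<lambda>y. y / x"])
      (auto simp: U_def)
  also have "\<dots> = x ^ card U * prod id U"
    by (simp add: prod.distrib)
  finally have "x ^ card U = 1"
    by (simp add: U_def)
  moreover have "card (UNIV :: 'a set) = Suc (card U)"
    using finite_UNIV_card_ge_0[where 'a = 'a] by (simp add: U_def card_Diff_singleton)
  ultimately show ?thesis
    by simp
qed

lemma CHAR_eq_if_card_prime_power:
  assumes "prime p" "k > 0" "card (UNIV :: 'a::{finite,field} set) = p ^ k"
  shows "CHAR('a) = p"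
proof -
  have "prime CHAR('a)"
    using prime_CHAR_semidom finite_imp_CHAR_pos[OF finite_UNIV] by blast
  moreover have "CHAR('a) dvd p ^ k"
    using CHAR_dvd_CARD[where 'a = 'a] assms(3) by simp
  ultimately show ?thesis
    using assms(1) prime_dvd_power primes_dvd_imp_eq by blast
qed

lemma power_eq_self_power_exponent:
  fixes x :: "'a::monoid_mult"
  assumes "x ^ q = x"
  shows "x ^ (q ^ n) = x"
  by (induction n) (simp_all add: assms power_mult flip: power_Suc2)

lemma power_eq_self_power_base:
  fixes x :: "'a::monoid_mult"
  assumes "x ^ t = x"
  shows "(x ^ i) ^ t = x ^ i"
  by (metis assms power_mult mult.commute)

definition goppa_syndrome :: "('a::field) set \<Rightarrow> ('a \<Rightarrow> 'a) \<Rightarrow> ('a \<Rightarrow> 'a) \<Rightarrow> nat \<Rightarrow> 'a" where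
  "goppa_syndrome L g c s = (\<Sum>a\<in>L. c a * a ^ s / g a)"

lemma goppa_code_eq_syndromes:
  "goppa_code q L P = {c \<in> words q L. \<forall>s < degree P. goppa_syndrome L (poly P) c s = 0}"
  by (simp add: goppa_code_def goppa_syndrome_def)

lemma goppa_syndrome_shift:
  assumes "0 \<notin> L"
  shows "goppa_syndrome L (\<lambda>a. a ^ m * g a) c (s + m) = goppa_syndrome L g c s"
  unfolding goppa_syndrome_def
  by (rule sum.cong) (use assms in \<open>auto simp: power_add\<close>)

lemma goppa_syndrome_frobenius:
  fixes L :: "'a::field set"
  assumes "prime CHAR('a)" "t = CHAR('a) ^ n"
    and "\<And>x::'a. x ^ (t * t) = x"
    and "\<And>a. a \<in> L \<Longrightarrow> c a ^ t = c a" "\<And>a. a \<in> L \<Longrightarrow> g a ^ t = g a"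
  shows "goppa_syndrome L g c (s * t) ^ t = goppa_syndrome L g c s"
proof -
  have "(c a * a ^ (s * t) / g a) ^ t = c a * a ^ s / g a" if "a \<in> L" for a
  proof -
    have "(a ^ (s * t)) ^ t = (a ^ (t * t)) ^ s"
      by (simp flip: power_mult add: ac_simps)
    then show ?thesis
      using that assms(3-5) by (simp add: power_mult_distrib power_divide)
  qed
  then show ?thesis
    unfolding goppa_syndrome_def freshmans_dream_sum'[OF assms(1,2)] by simp
qed

lemma words_power_eq_self:
  assumes "c \<in> words q L" "a \<in> L"
  shows "c a ^ (q ^ l) = c a"
  using assms by (intro power_eq_self_power_exponent) (simp add: words_def subfield_GF_def)

lemma vanish_below_mult_Suc_iff:
  fixes S :: "nat \<Rightarrow> 'b::zero"
  assumes "1 \<le> i" "i < t"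
    and "\<And>s. S (s * t) = 0 \<Longrightarrow> S s = 0"
  shows "(\<forall>s < i * (t + 1). S s = 0) \<longleftrightarrow> S 0 = 0 \<and> (\<forall>s < i * t. S (s + i) = 0)"
proof safe
  fix s assume "\<forall>s < i * (t + 1). S s = 0" "s < i * t"
  then show "S (s + i) = 0"
    by simp
next
  assume "\<forall>s < i * (t + 1). S s = 0"
  then show "S 0 = 0"
    using assms(1) by simp
next
  fix s assume S0: "S 0 = 0" and shifted: "\<forall>s < i * t. S (s + i) = 0"
    and s: "s < i * (t + 1)"
  have shifted': "S u = 0" if "i \<le> u" "u < i * (t + 1)" for u
    using shifted[rule_format, of "u - i"] that by (simp add: algebra_simps)
  consider "s = 0" | "i \<le> s" | "0 < s" "s < i"
    by linarith
  then show "S s = 0"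
  proof cases
    case 3
    have "t \<le> s * t" and st: "s * t < i * t"
      using 3 assms(2) by simp_all
    then have "i \<le> s * t" "s * t < i * (t + 1)"
      using assms(2) by (linarith, intro less_le_trans[OF st]) simp
    then show ?thesis
      using assms(3) shifted' by blast
  qed (use S0 shifted' s in auto)
qed

lemma is_parity_check_goppa_code:
  "is_parity_check q L (map (\<lambda>s a. a ^ s / poly P a) [0..<degree P]) (goppa_code q L P)"
  by (auto simp: is_parity_check_def goppa_code_def)

lemma is_parity_check_Cons:
  assumes "is_parity_check q L H C"
  shows "is_parity_check q L (r # H) {c \<in> C. (\<Sum>a\<in>L. c a * r a) = 0}"
  using assms by (auto simp: is_parity_check_def)

lemma G5_eq_X_times_G4:
  assumes "t \<ge> 1"
  shows "G5 t = [:0, 1:] * G4 t"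
  using assms by (simp add: G4_def G5_def monom_altdef algebra_simps flip: power_Suc)

lemma degree_G4:
  assumes "t \<ge> 2"
  shows "degree (G4 t :: 'a::field poly) = t"
proof -
  have "degree (Polynomial.monom (1::'a) t + Polynomial.monom 1 (t - 1)) = t"
    using assms by (subst degree_add_eq_left) (auto simp: degree_monom_eq)
  then show ?thesis
    unfolding G4_def using assms by (subst degree_add_eq_left) auto
qed

lemma G4_neq_zero:
  assumes "t \<ge> 2"
  shows "G4 t \<noteq> (0 :: 'a::field poly)"
  using degree_G4[OF assms, where 'a = 'a] assms by auto

lemma degree_G4_power:
  assumes "t \<ge> 2"
  shows "degree (G4 t ^ i :: 'a::field poly) = i * t"
  using assms by (simp add: degree_power_eq degree_G4 G4_neq_zero)

lemma degree_G5_power: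
  assumes "t \<ge> 2"
  shows "degree (G5 t ^ i :: 'a::field poly) = i * (t + 1)"
  using assms
  by (simp add: G5_eq_X_times_G4 degree_power_eq degree_mult_eq degree_G4 G4_neq_zero)

lemma poly_G5_power_eq_self:
  fixes a :: "'a::field"
  assumes "prime CHAR('a)" "t = CHAR('a) ^ n"
    and "\<And>x::'a. x ^ (t * t) = x"
  shows "poly (G5 t) a ^ t = poly (G5 t) a"
proof -
  have "(a ^ t) ^ t = a"
    by (simp add: assms(3) flip: power_mult)
  then show ?thesis
    by (simp add: G5_def poly_monom freshmans_dream'[OF assms(1,2)] power_mult_distrib)
qed

lemma goppa_code_G5_power_eq:
  fixes L :: "'a::field set"
  assumes "prime CHAR('a)" "t = CHAR('a) ^ n" "\<And>x::'a. x ^ (t * t) = x"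
    and "t = q ^ l" "0 \<notin> L" "1 \<le> i" "i < t"
  shows "goppa_code q L (G5 t ^ i)
    = {c \<in> goppa_code q L (G4 t ^ i). (\<Sum>a\<in>L. c a / poly (G5 t) a ^ i) = 0}"
proof -
  define g :: "'a \<Rightarrow> 'a" where "g a = poly (G5 t) a ^ i" for a
  let ?S = "goppa_syndrome L g"
  have "t \<ge> 2"
    using assms(6,7) by simp
  note deg4 = degree_G4_power[OF this] and deg5 = degree_G5_power[OF this]
  have g_eq: "poly (G5 t ^ i) = g"
    by (simp add: fun_eq_iff g_def poly_power)
  have "g = (\<lambda>a. a ^ i * poly (G4 t ^ i) a)"
    using assms(6,7) by (simp add: fun_eq_iff g_def G5_eq_X_times_G4 poly_power power_mult_distrib)
  then have shifted: "goppa_syndrome L (poly (G4 t ^ i)) c s = ?S c (s + i)" for c s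
    using goppa_syndrome_shift[OF assms(5), of i "poly (G4 t ^ i)"] by simp
  have "(\<forall>s < i * (t + 1). ?S c s = 0) \<longleftrightarrow> ?S c 0 = 0 \<and> (\<forall>s < i * t. ?S c (s + i) = 0)"
    if "c \<in> words q L" for c
  proof (rule vanish_below_mult_Suc_iff[OF assms(6,7)])
    fix s assume "?S c (s * t) = 0"
    moreover have "?S c (s * t) ^ t = ?S c s"
    proof (rule goppa_syndrome_frobenius[OF assms(1-3)])
      show "c a ^ t = c a" if "a \<in> L" for a
        using words_power_eq_self[OF \<open>c \<in> words q L\<close> that] assms(4) by simp
      show "g a ^ t = g a" for a
        unfolding g_def
        by (intro power_eq_self_power_base poly_G5_power_eq_self[OF assms(1-3)])
    qed
    ultimately show "?S c s = 0"
      using assms(7) by (simp add: zero_power)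
  qed
  moreover have "(\<Sum>a\<in>L. c a / poly (G5 t) a ^ i) = ?S c 0" for c
    by (simp add: goppa_syndrome_def g_def)
  ultimately show ?thesis
    unfolding goppa_code_eq_syndromes deg4 deg5 shifted g_eq by auto
qed

theorem lemma6:
  fixes q l t i :: nat
    and F :: "'a::{finite,field} itself"
  assumes "\<exists>p k. prime p \<and> k > 0 \<and> q = p ^ k"
    and "l \<ge> 1" and "t = q ^ l"
    and "card (UNIV :: 'a set) = t ^ 2"
    and "1 \<le> i" and "i < q - 1"
  shows "is_parity_check q (L4star t :: 'a set)
           ((\<lambda>a. 1 / poly (G5 t) a ^ i) # map (\<lambda>s a. a ^ s / poly (G4 t) a ^ i) [0..<i * t])
           (goppa_code q (L4star t :: 'a set) (G5 t ^ i))
       \<and> goppa_code q (L4star t :: 'a set) (G5 t ^ i)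
           = {c \<in> goppa_code q (L4star t) (G4 t ^ i). (\<Sum>a\<in>(L4star t :: 'a set). c a / poly (G5 t) a ^ i) = 0}
       \<and> (\<forall>a \<in> L4star t. 1 / poly (G5 t) a ^ i \<in> (subfield_GF t :: 'a set))"
proof -
  obtain p k where p: "prime p" "k > 0" "q = p ^ k"
    using assms(1) by blast
  have t: "t = p ^ (k * l)"
    using p(3) assms(3) by (simp add: power_mult)
  have "CHAR('a) = p"
    using assms(2,4) t p(2)
    by (intro CHAR_eq_if_card_prime_power[OF p(1), of "k * l * 2"]) (simp_all add: power_mult)
  then have char: "prime CHAR('a)" "t = CHAR('a) ^ (k * l)"
    using p(1) t by simp_all
  have t_square: "x ^ (t * t) = x" for x :: 'a
    using power_card_UNIV_eq_self[of x] assms(4) by (simp add: power2_eq_square)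
  have "i < t"
    using assms(2,3,6) self_le_power[of q l] by force
  have "0 \<notin> (L4star t :: 'a set)"
    by (simp add: L4star_def)
  note code_eq = goppa_code_G5_power_eq[OF char t_square assms(3) this assms(5) \<open>i < t\<close>]
  have "i * t = degree (G4 t ^ i :: 'a poly)"
    using \<open>i < t\<close> assms(5) by (simp add: degree_G4_power)
  from is_parity_check_Cons[OF is_parity_check_goppa_code[of q "L4star t :: 'a set" "G4 t ^ i", folded this],
    of "\<lambda>a. 1 / poly (G5 t) a ^ i"]
  have "is_parity_check q (L4star t :: 'a set)
           ((\<lambda>a. 1 / poly (G5 t) a ^ i) # map (\<lambda>s a. a ^ s / poly (G4 t) a ^ i) [0..<i * t])
           (goppa_code q (L4star t :: 'a set) (G5 t ^ i))"
    unfolding code_eq by (simp add: poly_power)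
  moreover have "1 / poly (G5 t) a ^ i \<in> (subfield_GF t :: 'a set)" for a :: 'a
    using power_eq_self_power_base[OF poly_G5_power_eq_self[OF char t_square, of a]]
    by (simp add: subfield_GF_def power_divide)
  ultimately show ?thesis
    using code_eq by blast
qed

end
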